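(* Let $G$ be a connected graph and $K\subseteq V(G)$ a nonempty set of vertices inducing a clique in $G$, and let $G_K$ be obtained from $G$ by adding a new vertex $x$ with $N_{G_K}(x)=K$. Let $\mathcal{R}_0=\{T(0,x,v_{\lambda(T)})\mid T\in V(\mathcal{R}(G))\}$ and $\mathcal{R}_1=\{T(\lambda(T)+1,x,v_{\lambda(T)})\mid T\in V(\mathcal{R}(G))\}$. Then $\mathcal{R}_0$ and $\mathcal{R}_1$ each induce a subgraph of $\mathcal{R}(G_K)$ isomorphic to $\mathcal{R}(G)$.
   Context: For a connected graph $G$, a search tree on $G$ is a rooted tree with vertex set $V(G)$ defined recursively: its root is some vertex $r\in V(G)$, and the children of $r$ are the roots of search trees on the connected components of $G-r$. For a rooted tree $T$ and $w\in V(T)$, $T|w$ denotes the subtree rooted at $w$. Let $T$ be a search tree on $G$, let $v$ be a child of $u$ in $T$, and let $p$ be the parent of $u$ (if it exists). The $uv$-rotation transforms $T$ into the search tree $T'$ in which: $u$ is a child of $v$ and $v$ is a child of $p$ (or $v$ is the root if $u$ was the root); every subtree of $u$ in $T$ other than $T|v$ is a subtree of $u$ in $T'$; and every subtree $S$ of $v$ in $T$ is a subtree of $u$ in $T'$ if $u$ is adjacent in $G$ to some vertex of $S$, and a subtree of $v$ in $T'$ otherwise. The rotation graph $\mathcal{R}(G)$ is the graph whose vertices are the search trees on $G$, two being adjacent iff they differ by one rotation. For a rooted tree $T$ with root $r_T$ and $w\in V(T)$, $d_{T,w}$ is the distance from $r_T$ to $w$. For a search tree $T$ on $G$, $\lambda(T)=\max\{d_{T,u}\mid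 u\in K\}$ and $v_{\lambda(T)}$ is the unique vertex of $K$ at depth $\lambda(T)$ (vertices of a clique lie on a common root-to-leaf path). Insertion: for a rooted tree $T$, $v\in V(T)$ with $d=d_{T,v}$ and root-to-$v$ path $a_0,\ldots,a_d=v$, and $x\notin V(T)$: $T(0,x,v)$ has $x$ as new root with $T$ as its only subtree; for $1\le i\le d$, $T(i,x,v)$ subdivides the edge $a_{i-1}a_i$ by $x$; $T(d+1,x,v)$ adds $x$ as a new leaf child of $v$. *)

theory Defs
  imports Main "HOL-Library.FSet"
begin

definition graph :: "'a set \<Rightarrow> ('a \<Rightarrow> 'a \<Rightarrow> bool) \<Rightarrow> bool" where
  "graph V E \<longleftrightarrow> finite V \<and> (\<forall>a b. E a b \<longrightarrow> a \<in> V \<and> b \<in> V \<and> a \<noteq> b \<and> E b a)"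

definition reach_in :: "'a set \<Rightarrow> ('a \<Rightarrow> 'a \<Rightarrow> bool) \<Rightarrow> 'a \<Rightarrow> 'a \<Rightarrow> bool" where
  "reach_in S E = (\<lambda>p q. E p q \<and> p \<in> S \<and> q \<in> S)\<^sup>*\<^sup>*"

definition connected_on :: "'a set \<Rightarrow> ('a \<Rightarrow> 'a \<Rightarrow> bool) \<Rightarrow> bool" where
  "connected_on S E \<longleftrightarrow> S \<noteq> {} \<and> (\<forall>a\<in>S. \<forall>b\<in>S. reach_in S E a b)"

definition components_on :: "'a set \<Rightarrow> ('a \<Rightarrow> 'a \<Rightarrow> bool) \<Rightarrow> 'a set set" where
  "components_on S E = (\<lambda>a. {b \<in> S. reach_in S E a b}) ` S"

definition is_clique :: "'a set \<Rightarrow> ('a \<Rightarrow> 'a \<Rightarrow> bool) \<Rightarrow> bool" where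
  "is_clique K E \<longleftrightarrow> (\<forall>a\<in>K. \<forall>b\<in>K. a \<noteq> b \<longrightarrow> E a b)"

definition add_vertex_edges :: "('a \<Rightarrow> 'a \<Rightarrow> bool) \<Rightarrow> 'a set \<Rightarrow> 'a \<Rightarrow> ('a \<Rightarrow> 'a \<Rightarrow> bool)" where
  "add_vertex_edges E K x = (\<lambda>a b. E a b \<or> (a = x \<and> b \<in> K) \<or> (b = x \<and> a \<in> K))"

datatype 'a rtree = Node (root: 'a) (kids: "'a rtree fset")

inductive subtree_of :: "'a rtree \<Rightarrow> 'a rtree \<Rightarrow> bool" where
  refl: "subtree_of T T"
| kid: "C |\<in>| Cs \<Longrightarrow> subtree_of S C \<Longrightarrow> subtree_of S (Node r Cs)"

definition tverts :: "'a rtree \<Rightarrow> 'a set" where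
  "tverts T = root ` {S. subtree_of S T}"

inductive path_to :: "'a rtree \<Rightarrow> 'a \<Rightarrow> 'a list \<Rightarrow> bool" where
  here: "path_to (Node r Cs) r [r]"
| down: "C |\<in>| Cs \<Longrightarrow> path_to C w p \<Longrightarrow> path_to (Node r Cs) w (r # p)"

definition root_path :: "'a rtree \<Rightarrow> 'a \<Rightarrow> 'a list" where
  "root_path T w = (THE p. path_to T w p)"

definition depth :: "'a rtree \<Rightarrow> 'a \<Rightarrow> nat" where
  "depth T w = length (root_path T w) - 1"

inductive search_tree :: "('a \<Rightarrow> 'a \<Rightarrow> bool) \<Rightarrow> 'a set \<Rightarrow> 'a rtree \<Rightarrow> bool" for E where
  "connected_on V E \<Longrightarrow> r \<in> V \<Longrightarrow>
   (\<forall>C. C |\<in>| Cs \<longrightarrow> search_tree E (tverts C) C) \<Longrightarrow>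
   inj_on tverts (fset Cs) \<Longrightarrow>
   tverts ` fset Cs = components_on (V - {r}) E \<Longrightarrow>
   search_tree E V (Node r Cs)"

definition touches :: "('a \<Rightarrow> 'a \<Rightarrow> bool) \<Rightarrow> 'a \<Rightarrow> 'a rtree \<Rightarrow> bool" where
  "touches E u S \<longleftrightarrow> (\<exists>w\<in>tverts S. E u w)"

text \<open>rotation E u v T T': T' arises from T by the uv-rotation (v a child of u).
The subtree T|u is replaced by the rotated subtree rooted at v; the parent of u
(if any) becomes the parent of v.\<close>
inductive rotation :: "('a \<Rightarrow> 'a \<Rightarrow> bool) \<Rightarrow> 'a \<Rightarrow> 'a \<Rightarrow> 'a rtree \<Rightarrow> 'a rtree \<Rightarrow> bool"
  for E where
  at_u: "Node v Ds |\<in>| Cs \<Longrightarrow>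
    rotation E u v (Node u Cs)
      (Node v (ffilter (\<lambda>S. \<not> touches E u S) Ds |\<union>|
               {| Node u ((Cs |-| {|Node v Ds|}) |\<union>| ffilter (touches E u) Ds) |}))"
| below: "C |\<in>| Cs \<Longrightarrow> rotation E u v C C' \<Longrightarrow>
    rotation E u v (Node w Cs) (Node w (finsert C' (Cs |-| {|C|})))"

definition rot_verts :: "'a set \<Rightarrow> ('a \<Rightarrow> 'a \<Rightarrow> bool) \<Rightarrow> 'a rtree set" where
  "rot_verts V E = {T. search_tree E V T}"

definition rot_adj :: "'a set \<Rightarrow> ('a \<Rightarrow> 'a \<Rightarrow> bool) \<Rightarrow> 'a rtree \<Rightarrow> 'a rtree \<Rightarrow> bool" where
  "rot_adj V E T T' \<longleftrightarrow> T \<in> rot_verts V E \<and> T' \<in> rot_verts V E \<and> (\<exists>u v. rotation E u v T T')"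

primrec map_at :: "'a \<Rightarrow> ('a rtree \<Rightarrow> 'a rtree) \<Rightarrow> 'a rtree \<Rightarrow> 'a rtree" where
  "map_at a f (Node w Cs) = (if w = a then f (Node w Cs) else Node w (fimage (map_at a f) Cs))"

definition insertion :: "'a rtree \<Rightarrow> nat \<Rightarrow> 'a \<Rightarrow> 'a \<Rightarrow> 'a rtree" where
  "insertion T i x v =
    (if i = 0 then Node x {|T|}
     else if i \<le> depth T v then map_at (root_path T v ! i) (\<lambda>S. Node x {|S|}) T
     else map_at v (\<lambda>S. Node (root S) (finsert (Node x {||}) (kids S))) T)"

definition lam :: "'a set \<Rightarrow> 'a rtree \<Rightarrow> nat" where
  "lam K T = Max (depth T ` K)"

definition v_lam :: "'a set \<Rightarrow> 'a rtree \<Rightarrow> 'a" where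
  "v_lam K T = (THE u. u \<in> K \<and> depth T u = lam K T)"

definition induces_copy_of :: "'a rtree set \<Rightarrow> 'a set \<Rightarrow> ('a \<Rightarrow> 'a \<Rightarrow> bool) \<Rightarrow>
    'a set \<Rightarrow> ('a \<Rightarrow> 'a \<Rightarrow> bool) \<Rightarrow> bool" where
  "induces_copy_of R V' E' V E \<longleftrightarrow> R \<subseteq> rot_verts V' E' \<and>
     (\<exists>\<phi>. bij_betw \<phi> (rot_verts V E) R \<and>
        (\<forall>T\<in>rot_verts V E. \<forall>T'\<in>rot_verts V E.
            rot_adj V E T T' \<longleftrightarrow> rot_adj V' E' (\<phi> T) (\<phi> T')))"

end

theory Submission
  imports Defs
begin

text \<open>For \<open>R\<^sub>0\<close>, the copy map puts \<open>x\<close> on top of \<open>T\<close>. A rotation between two such trees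
  cannot involve the root \<open>x\<close>, so it happens inside \<open>T\<close>, where \<open>G\<close> and \<open>G\<^sub>K\<close> agree.

  For \<open>R\<^sub>1\<close>, the copy map hangs \<open>x\<close> as a leaf below the deepest clique vertex \<open>v\<^sub>\<lambda>\<close>.
  Adjacent vertices of a search tree are comparable, so all of \<open>K\<close> lies on the root path of
  \<open>v\<^sub>\<lambda>\<close>, which makes the extended tree a search tree on \<open>G\<^sub>K\<close>. A \<open>uv\<close>-rotation of \<open>T\<close> is also
  a \<open>uv\<close>-rotation of the extended tree: the leaf \<open>x\<close> follows \<open>u\<close> exactly when it hangs below \<open>v\<close>
  and \<open>u \<in> K\<close>, and then \<open>u\<close> is the new deepest clique vertex. Conversely, \<open>x\<close> remains a leaf
  in every extended tree, so a rotation between two of them does not lift \<open>x\<close>; it therefore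
  comes from a \<open>uv\<close>-rotation of \<open>T\<close>, and since a rotation is determined by \<open>u\<close> and \<open>v\<close>, the
  two extended trees correspond to its endpoints.\<close>

lemma ffilter_fempty [simp]: "ffilter P {||} = {||}"
  by (rule fset_eqI) simp

lemma ffilter_finsert:
  "ffilter P (finsert a A) = (if P a then finsert a (ffilter P A) else ffilter P A)"
  by (rule fset_eqI) auto

lemma ffilter_fimage: "ffilter P (f |`| A) = f |`| ffilter (\<lambda>y. P (f y)) A"
  by (rule fset_eqI) auto

lemma fimage_fminus_singleton:
  "(\<And>D. D |\<in>| A \<Longrightarrow> f D = f C \<Longrightarrow> D = C) \<Longrightarrow> f |`| A |-| {|f C|} = f |`| (A |-| {|C|})"
  by (rule fset_eqI) auto

lemma subtree_of_Node_iff: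
  "subtree_of S (Node r Cs) \<longleftrightarrow> S = Node r Cs \<or> (\<exists>C. C |\<in>| Cs \<and> subtree_of S C)"
  by (auto elim: subtree_of.cases intro: subtree_of.intros)

lemma tverts_Node: "tverts (Node r Cs) = insert r (\<Union>C\<in>fset Cs. tverts C)"
  unfolding tverts_def by (auto simp: subtree_of_Node_iff intro: rev_image_eqI)

lemma tverts_leaf [simp]: "tverts (Node r {||}) = {r}"
  by (simp add: tverts_Node)

lemma root_in_tverts: "root T \<in> tverts T"
  by (cases T) (simp add: tverts_Node)

lemma tverts_kid_subset: "C |\<in>| Cs \<Longrightarrow> tverts C \<subseteq> tverts (Node r Cs)"
  by (auto simp: tverts_Node)

lemma subtree_of_root_in_tverts: "subtree_of S T \<Longrightarrow> root S \<in> tverts T"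
  unfolding tverts_def by blast

inductive distinct_labels :: "'a rtree \<Rightarrow> bool" where
  "(\<forall>C. C |\<in>| Cs \<longrightarrow> distinct_labels C \<and> r \<notin> tverts C) \<Longrightarrow>
   (\<forall>C1 C2. C1 |\<in>| Cs \<longrightarrow> C2 |\<in>| Cs \<longrightarrow> C1 \<noteq> C2 \<longrightarrow> tverts C1 \<inter> tverts C2 = {}) \<Longrightarrow>
   distinct_labels (Node r Cs)"

lemma distinct_labels_Node:
  "distinct_labels (Node r Cs) \<longleftrightarrow>
   (\<forall>C. C |\<in>| Cs \<longrightarrow> distinct_labels C \<and> r \<notin> tverts C) \<and>
   (\<forall>C1 C2. C1 |\<in>| Cs \<longrightarrow> C2 |\<in>| Cs \<longrightarrow> C1 \<noteq> C2 \<longrightarrow> tverts C1 \<inter> tverts C2 = {})"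
  by (rule iffI, erule distinct_labels.cases, simp, rule distinct_labels.intros; blast)

lemma distinct_labels_kid_eq:
  "distinct_labels (Node r Cs) \<Longrightarrow> C1 |\<in>| Cs \<Longrightarrow> C2 |\<in>| Cs \<Longrightarrow>
   a \<in> tverts C1 \<Longrightarrow> a \<in> tverts C2 \<Longrightarrow> C1 = C2"
  unfolding distinct_labels_Node by blast

lemma distinct_labels_kidD:
  "distinct_labels (Node r Cs) \<Longrightarrow> C |\<in>| Cs \<Longrightarrow> distinct_labels C \<and> r \<notin> tverts C"
  unfolding distinct_labels_Node by blast

lemma reach_in_refl [simp]: "reach_in S R a a"
  unfolding reach_in_def by simp

lemma reach_in_step: "R a b \<Longrightarrow> a \<in> S \<Longrightarrow> b \<in> S \<Longrightarrow> reach_in S R a b"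
  unfolding reach_in_def by auto

lemma reach_in_trans: "reach_in S R a b \<Longrightarrow> reach_in S R b c \<Longrightarrow> reach_in S R a c"
  unfolding reach_in_def by auto

lemma reach_in_sym:
  assumes "symp R" "reach_in S R a b"
  shows "reach_in S R b a"
proof -
  have "symp (\<lambda>p q. R p q \<and> p \<in> S \<and> q \<in> S)"
    using assms(1) by (auto simp: symp_def)
  then have "symp (reach_in S R)"
    unfolding reach_in_def by (rule symp_rtranclp)
  then show ?thesis
    using assms(2) by (rule sympD)
qed

lemma reach_in_closed:
  assumes "reach_in S R a b" "a \<in> P"
    and "\<And>y z. y \<in> P \<Longrightarrow> R y z \<Longrightarrow> y \<in> S \<Longrightarrow> z \<in> S \<Longrightarrow> z \<in> P"
  shows "b \<in> P"
  using assms(1,2) unfolding reach_in_def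
  by (induction rule: rtranclp_induct) (auto intro: assms(3))

lemma reach_in_mono:
  assumes "reach_in S R a b" "S \<subseteq> S'" "\<And>p q. p \<in> S \<Longrightarrow> q \<in> S \<Longrightarrow> R p q \<Longrightarrow> R' p q"
  shows "reach_in S' R' a b"
proof -
  have "(\<lambda>p q. R p q \<and> p \<in> S \<and> q \<in> S) \<le> (\<lambda>p q. R' p q \<and> p \<in> S' \<and> q \<in> S')"
    using assms(2,3) by auto
  from rtranclp_mono[OF this] show ?thesis
    using assms(1) unfolding reach_in_def by blast
qed

lemma reach_in_cong:
  "(\<And>p q. p \<in> S \<Longrightarrow> q \<in> S \<Longrightarrow> R1 p q = R2 p q) \<Longrightarrow> reach_in S R1 = reach_in S R2"
proof -
  assume "\<And>p q. p \<in> S \<Longrightarrow> q \<in> S \<Longrightarrow> R1 p q = R2 p q"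
  then have "(\<lambda>p q. R1 p q \<and> p \<in> S \<and> q \<in> S) = (\<lambda>p q. R2 p q \<and> p \<in> S \<and> q \<in> S)"
    by blast
  then show ?thesis
    unfolding reach_in_def by simp
qed

lemma components_on_cong:
  "(\<And>p q. p \<in> S \<Longrightarrow> q \<in> S \<Longrightarrow> R1 p q = R2 p q) \<Longrightarrow> components_on S R1 = components_on S R2"
  unfolding components_on_def by (subst reach_in_cong[of S R1 R2]) simp_all

lemma connected_on_cong:
  "(\<And>p q. p \<in> S \<Longrightarrow> q \<in> S \<Longrightarrow> R1 p q = R2 p q) \<Longrightarrow> connected_on S R1 = connected_on S R2"
  unfolding connected_on_def by (subst reach_in_cong[of S R1 R2]) simp_all

definition component_of :: "'a set \<Rightarrow> ('a \<Rightarrow> 'a \<Rightarrow> bool) \<Rightarrow> 'a \<Rightarrow> 'a set" where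
  "component_of S R a = {b \<in> S. reach_in S R a b}"

lemma components_on_component_of: "components_on S R = component_of S R ` S"
  unfolding components_on_def component_of_def ..

lemma component_of_in_components_on:
  "a \<in> S \<Longrightarrow> component_of S R a \<in> components_on S R \<and> a \<in> component_of S R a"
  unfolding components_on_component_of component_of_def by auto

lemma components_on_eqI:
  assumes nonempty_sub: "\<And>Q. Q \<in> P \<Longrightarrow> Q \<noteq> {} \<and> Q \<subseteq> S"
    and cover: "\<And>a. a \<in> S \<Longrightarrow> \<exists>Q\<in>P. a \<in> Q"
    and closed: "\<And>Q a b. Q \<in> P \<Longrightarrow> a \<in> Q \<Longrightarrow> R a b \<Longrightarrow> b \<in> S \<Longrightarrow> b \<in> Q"
    and connected: "\<And>Q a b. Q \<in> P \<Longrightarrow> a \<in> Q \<Longrightarrow> b \<in> Q \<Longrightarrow> reach_in S R a b"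
  shows "components_on S R = P"
proof -
  have component: "component_of S R a = Q" if "Q \<in> P" "a \<in> Q" for Q a
  proof
    show "Q \<subseteq> component_of S R a"
      using that nonempty_sub connected unfolding component_of_def by blast
    show "component_of S R a \<subseteq> Q"
      using that closed reach_in_closed[of S R a _ Q] unfolding component_of_def by blast
  qed
  show ?thesis
    unfolding components_on_component_of
  proof
    show "component_of S R ` S \<subseteq> P"
      using cover component by blast
    show "P \<subseteq> component_of S R ` S"
    proof
      fix Q assume "Q \<in> P"
      then obtain a where "a \<in> Q" "a \<in> S"
        using nonempty_sub by blast
      then show "Q \<in> component_of S R ` S"
        using component[OF \<open>Q \<in> P\<close>] by blast
    qed
  qed
qed

lemma components_on_nonempty: "Q \<in> components_on S R \<Longrightarrow> Q \<noteq> {}"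
  and components_on_subset: "Q \<in> components_on S R \<Longrightarrow> Q \<subseteq> S"
  unfolding components_on_component_of component_of_def by auto

context
  fixes S :: "'a set" and R :: "'a \<Rightarrow> 'a \<Rightarrow> bool" and Q :: "'a set"
  assumes sym: "symp R" and component: "Q \<in> components_on S R"
begin

lemma components_on_component_of_mem: "a \<in> Q \<Longrightarrow> Q = component_of S R a"
proof -
  obtain c where c: "c \<in> S" "Q = component_of S R c"
    using component unfolding components_on_component_of by blast
  assume "a \<in> Q"
  then have ca: "reach_in S R c a"
    using c unfolding component_of_def by blast
  have ac: "reach_in S R a c"
    using reach_in_sym[OF sym ca] .
  show ?thesis
    unfolding c(2) component_of_def
    using reach_in_trans[OF ca] reach_in_trans[OF ac] by blast
qed

lemma components_on_closed:
  assumes "a \<in> Q" "R a b" "b \<in> S"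
  shows "b \<in> Q"
proof -
  have "a \<in> S"
    using assms(1) components_on_subset[OF component] by blast
  with assms(2,3) have "reach_in S R a b"
    by (simp add: reach_in_step)
  then show ?thesis
    using components_on_component_of_mem[OF assms(1)] assms(3)
    unfolding component_of_def by blast
qed

lemma components_on_reach:
  assumes "a \<in> Q" "b \<in> Q"
  shows "reach_in S R a b"
proof -
  have "b \<in> component_of S R a"
    using assms components_on_component_of_mem[OF assms(1)] by simp
  then show ?thesis
    by (simp add: component_of_def)
qed

end

lemma components_on_disjoint:
  "symp R \<Longrightarrow> Q1 \<in> components_on S R \<Longrightarrow> Q2 \<in> components_on S R \<Longrightarrow>
   a \<in> Q1 \<Longrightarrow> a \<in> Q2 \<Longrightarrow> Q1 = Q2"
  by (metis components_on_component_of_mem)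

lemma Union_components_on: "symp R \<Longrightarrow> \<Union>(components_on S R) = S"
  using components_on_subset component_of_in_components_on by (metis Sup_le_iff UnionI subsetI subset_antisym)

lemma components_on_if_connected_on: "connected_on S R \<Longrightarrow> components_on S R = {S}"
  by (rule components_on_eqI) (simp_all add: connected_on_def)

lemma connected_on_if_components_on: "components_on S R = {S} \<Longrightarrow> S \<noteq> {} \<Longrightarrow> connected_on S R"
proof -
  assume "components_on S R = {S}" "S \<noteq> {}"
  then have "component_of S R a = S" if "a \<in> S" for a
    using that unfolding components_on_component_of by blast
  then show ?thesis
    unfolding connected_on_def component_of_def using \<open>S \<noteq> {}\<close> by blast
qed

lemma search_tree_tverts_distinct_labels:
  assumes "search_tree R S T" "symp R"
  shows "tverts T = S \<and> distinct_labels T"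
  using assms(1)
proof (induction rule: search_tree.induct)
  case (1 V r Cs)
  have kids: "tverts C \<in> components_on (V - {r}) R" if "C |\<in>| Cs" for C
    using "1.hyps"(4) that by blast
  have "(\<Union>C\<in>fset Cs. tverts C) = V - {r}"
    using Union_components_on[OF assms(2), of "V - {r}"] "1.hyps"(4) by simp
  then have "tverts (Node r Cs) = V"
    using "1.hyps"(2) by (auto simp: tverts_Node)
  moreover have "distinct_labels (Node r Cs)"
  proof (rule distinct_labels.intros)
    show "\<forall>C. C |\<in>| Cs \<longrightarrow> distinct_labels C \<and> r \<notin> tverts C"
      using "1.IH" components_on_subset[OF kids] by blast
    show "\<forall>C1 C2. C1 |\<in>| Cs \<longrightarrow> C2 |\<in>| Cs \<longrightarrow> C1 \<noteq> C2 \<longrightarrow> tverts C1 \<inter> tverts C2 = {}"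
      using components_on_disjoint[OF assms(2) kids kids] "1.hyps"(3)
      by (metis disjoint_iff inj_onD)
  qed
  ultimately show ?case ..
qed

lemma search_tree_cong:
  assumes "search_tree R1 S T" "\<And>p q. p \<in> S \<Longrightarrow> q \<in> S \<Longrightarrow> R1 p q = R2 p q"
  shows "search_tree R2 S T"
  using assms
proof (induction rule: search_tree.induct)
  case (1 V r Cs)
  have "tverts C \<subseteq> V" if "C |\<in>| Cs" for C
    using components_on_subset "1.hyps"(4) that by blast
  with 1 show ?case
    using connected_on_cong[of V R1 R2] components_on_cong[of "V - {r}" R1 R2]
    by (intro search_tree.intros) (simp_all, meson subsetD)
qed

lemma search_tree_leaf: "search_tree R {y} (Node y {||})"
  by (rule search_tree.intros) (simp_all add: connected_on_def components_on_def)

lemma search_tree_NodeD: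
  assumes "search_tree R W (Node r Cs)"
  shows "connected_on W R" "r \<in> W" "\<And>C. C |\<in>| Cs \<Longrightarrow> search_tree R (tverts C) C"
    "inj_on tverts (fset Cs)" "tverts ` fset Cs = components_on (W - {r}) R"
  using assms by (auto elim: search_tree.cases)

lemma path_to_Node:
  "path_to (Node r Cs) w p \<longleftrightarrow>
   (w = r \<and> p = [r]) \<or> (\<exists>C q. C |\<in>| Cs \<and> path_to C w q \<and> p = r # q)"
  by (auto elim: path_to.cases intro: path_to.intros)

lemma path_toD:
  "path_to T w p \<Longrightarrow> w \<in> tverts T \<and> set p \<subseteq> tverts T \<and> p \<noteq> [] \<and> last p = w \<and> hd p = root T"
  by (induction rule: path_to.induct) (auto simp: tverts_Node)

lemma path_to_exists: "w \<in> tverts T \<Longrightarrow> \<exists>p. path_to T w p"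
proof (induction T)
  case (Node r Cs)
  then show ?case
    by (auto simp: tverts_Node intro: path_to.intros)
qed

lemma path_to_unique: "path_to T w p \<Longrightarrow> distinct_labels T \<Longrightarrow> path_to T w q \<Longrightarrow> p = q"
proof (induction arbitrary: q rule: path_to.induct)
  case (here r Cs)
  then show ?case
    unfolding path_to_Node distinct_labels_Node by (metis path_toD)
next
  case (down C Cs w p r)
  have "w \<noteq> r"
    using down.hyps down.prems(1) path_toD distinct_labels_kidD by metis
  then obtain C' q' where q: "C' |\<in>| Cs" "path_to C' w q'" "q = r # q'"
    using down.prems(2) unfolding path_to_Node by blast
  have "C' = C"
    using distinct_labels_kid_eq[OF down.prems(1) q(1) down.hyps(1)] path_toD q(2) down.hyps(2)
    by metis
  then show ?case
    using down.IH distinct_labels_kidD[OF down.prems(1) down.hyps(1)] q by simp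
qed

lemma path_to_prefix: "path_to T b p \<Longrightarrow> a \<in> set p \<Longrightarrow> \<exists>q s. path_to T a q \<and> p = q @ s"
proof (induction arbitrary: a rule: path_to.induct)
  case (here r Cs)
  then show ?case
    using path_to.here[of r Cs] by auto
next
  case (down C Cs w p r)
  show ?case
  proof (cases "a = r")
    case True
    then show ?thesis
      by (metis append_Cons append_Nil path_to.here)
  next
    case False
    then have "a \<in> set p"
      using down.prems by simp
    then obtain q s where "path_to C a q" "p = q @ s"
      using down.IH by blast
    then show ?thesis
      using path_to.down[OF down.hyps(1)] by fastforce
  qed
qed

lemma root_path_eq: "distinct_labels T \<Longrightarrow> path_to T w p \<Longrightarrow> root_path T w = p"
  unfolding root_path_def by (rule the_equality) (auto intro: path_to_unique)

lemma depth_eq: "distinct_labels T \<Longrightarrow> path_to T w p \<Longrightarrow> depth T w = length p - 1"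
  unfolding depth_def by (simp add: root_path_eq)

lemma depth_less_if_on_path:
  assumes "distinct_labels T" "path_to T b p" "a \<in> set p" "a \<noteq> b"
  shows "depth T a < depth T b"
proof -
  obtain q s where qs: "path_to T a q" "p = q @ s"
    using path_to_prefix[OF assms(2,3)] by blast
  have "s \<noteq> []"
    using qs path_toD[OF qs(1)] path_toD[OF assms(2)] assms(4) by auto
  moreover have "q \<noteq> []"
    using path_toD[OF qs(1)] by blast
  ultimately show ?thesis
    using qs depth_eq[OF assms(1) qs(1)] depth_eq[OF assms(1,2)] by (cases q; cases s) auto
qed

lemma search_tree_adjacent_comparable:
  assumes "search_tree R S T" "symp R"
  shows "R a b \<Longrightarrow> a \<in> S \<Longrightarrow> b \<in> S \<Longrightarrow> path_to T a p \<Longrightarrow> path_to T b q \<Longrightarrow>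
    a \<in> set q \<or> b \<in> set p"
  using assms(1)
proof (induction arbitrary: a b p q rule: search_tree.induct)
  case (1 V r Cs)
  show ?case
  proof (cases "a = r \<or> b = r")
    case True
    then show ?thesis
      using path_toD[OF "1.prems"(4)] path_toD[OF "1.prems"(5)] hd_in_set by fastforce
  next
    case False
    obtain C p' where C: "C |\<in>| Cs" "path_to C a p'" "p = r # p'"
      using "1.prems"(4) False unfolding path_to_Node by blast
    obtain C' q' where C': "C' |\<in>| Cs" "path_to C' b q'" "q = r # q'"
      using "1.prems"(5) False unfolding path_to_Node by blast
    have comps: "tverts C \<in> components_on (V - {r}) R" "tverts C' \<in> components_on (V - {r}) R"
      using "1.hyps"(4) C(1) C'(1) by auto
    have "a \<in> tverts C" "b \<in> tverts C'"
      using path_toD[OF C(2)] path_toD[OF C'(2)] by blast+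
    moreover have "b \<in> tverts C"
      using components_on_closed[OF assms(2) comps(1) \<open>a \<in> tverts C\<close> "1.prems"(1)]
        "1.prems"(3) False by blast
    ultimately have "C = C'"
      using components_on_disjoint[OF assms(2) comps] "1.hyps"(3) C(1) C'(1) by (meson inj_onD)
    then have "a \<in> set q' \<or> b \<in> set p'"
      using "1.IH" C(1) "1.prems"(1) \<open>a \<in> tverts C\<close> \<open>b \<in> tverts C\<close> C(2) C'(2) by blast
    then show ?thesis
      using C C' by auto
  qed
qed

section \<open>Hanging a leaf below a vertex\<close>

definition add_leaf :: "'a \<Rightarrow> 'a \<Rightarrow> 'a rtree \<Rightarrow> 'a rtree" where
  "add_leaf x a = map_at a (\<lambda>S. Node (root S) (finsert (Node x {||}) (kids S)))"

lemma insertion_below_depth: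
  "depth T v < i \<Longrightarrow> insertion T i x v = add_leaf x v T"
  unfolding insertion_def add_leaf_def by simp

lemma add_leaf_Node:
  "add_leaf x a (Node w Cs) =
   (if w = a then Node w (finsert (Node x {||}) Cs) else Node w (add_leaf x a |`| Cs))"
  unfolding add_leaf_def by simp

lemma root_add_leaf [simp]: "root (add_leaf x a T) = root T"
  by (cases T) (simp add: add_leaf_Node)

lemma add_leaf_absent: "a \<notin> tverts T \<Longrightarrow> add_leaf x a T = T"
proof (induction T)
  case (Node w Cs)
  have "add_leaf x a |`| Cs = Cs"
  proof (rule fset.map_ident_strong)
    fix C
    assume "C |\<in>| Cs"
    then show "add_leaf x a C = C"
      using Node tverts_kid_subset[of C Cs w] by blast
  qed
  moreover have "w \<noteq> a"
    using Node.prems by (auto simp: tverts_Node)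
  ultimately show ?case
    by (simp add: add_leaf_Node)
qed

lemma tverts_add_leaf: "a \<in> tverts T \<Longrightarrow> tverts (add_leaf x a T) = insert x (tverts T)"
proof (induction T)
  case (Node w Cs)
  show ?case
  proof (cases "w = a")
    case False
    then obtain C where "C |\<in>| Cs" "a \<in> tverts C"
      using Node.prems by (auto simp: tverts_Node)
    moreover have "tverts (add_leaf x a D) = tverts D" if "a \<notin> tverts D" for D
      using that by (simp add: add_leaf_absent)
    ultimately show ?thesis
      using False Node.IH by (fastforce simp: add_leaf_Node tverts_Node)
  qed (auto simp: add_leaf_Node tverts_Node)
qed

lemma add_leaf_kids:
  assumes "distinct_labels (Node w Cs)" "C0 |\<in>| Cs" "a \<in> tverts C0"
  shows "add_leaf x a |`| Cs = finsert (add_leaf x a C0) (Cs |-| {|C0|})"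
proof -
  have "add_leaf x a |`| (Cs |-| {|C0|}) = Cs |-| {|C0|}"
    using distinct_labels_kid_eq[OF assms(1) _ assms(2) _ assms(3)]
    by (intro fset.map_ident_strong add_leaf_absent) auto
  then show ?thesis
    using assms(2) by (metis fimage_finsert finsert_fminus)
qed

primrec prune :: "'a \<Rightarrow> 'a rtree \<Rightarrow> 'a rtree" where
  "prune x (Node r Cs) = Node r (ffilter (\<lambda>C. root C \<noteq> x) (prune x |`| Cs))"

lemma prune_absent: "x \<notin> tverts T \<Longrightarrow> prune x T = T"
proof (induction T)
  case (Node w Cs)
  have kid_absent: "x \<notin> tverts C" if "C |\<in>| Cs" for C
    using Node.prems tverts_kid_subset[OF that] by blast
  have "prune x |`| Cs = Cs"
    using Node.IH kid_absent by (intro fset.map_ident_strong) simp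
  moreover have "ffilter (\<lambda>C. root C \<noteq> x) Cs = Cs"
    using kid_absent root_in_tverts by (intro fset_eqI) fastforce
  ultimately show ?case
    by simp
qed

lemma prune_add_leaf: "x \<notin> tverts T \<Longrightarrow> prune x (add_leaf x a T) = T"
proof (induction T)
  case (Node w Cs)
  have kid_absent: "x \<notin> tverts C" if "C |\<in>| Cs" for C
    using Node.prems tverts_kid_subset[OF that] by blast
  then have kid_root: "root C \<noteq> x" if "C |\<in>| Cs" for C
    using that root_in_tverts by metis
  show ?case
  proof (cases "w = a")
    case True
    have "prune x |`| Cs = Cs"
      by (rule fset.map_ident_strong) (simp add: prune_absent kid_absent)
    moreover have "ffilter (\<lambda>C. root C \<noteq> x) (finsert (Node x {||}) Cs) = Cs"
      by (rule fset_eqI) (auto dest: kid_root)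
    ultimately show ?thesis
      using True by (simp add: add_leaf_Node)
  next
    case False
    have "prune x |`| add_leaf x a |`| Cs = Cs"
      unfolding fset.map_comp by (rule fset.map_ident_strong) (simp add: Node.IH kid_absent)
    moreover have "ffilter (\<lambda>C. root C \<noteq> x) Cs = Cs"
      by (rule fset_eqI) (auto dest: kid_root)
    ultimately show ?thesis
      using False by (simp add: add_leaf_Node)
  qed
qed

lemma add_leaf_inj:
  "x \<notin> tverts C \<Longrightarrow> x \<notin> tverts D \<Longrightarrow> add_leaf x a C = add_leaf x a D \<Longrightarrow> C = D"
  by (metis prune_add_leaf)

definition is_leaf_label :: "'a \<Rightarrow> 'a rtree \<Rightarrow> bool" where
  "is_leaf_label x T \<longleftrightarrow> (\<forall>Cs. subtree_of (Node x Cs) T \<longrightarrow> Cs = {||})"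

lemma is_leaf_label_add_leaf: "x \<notin> tverts T \<Longrightarrow> is_leaf_label x (add_leaf x a T)"
proof (induction T)
  case (Node w Cs)
  have kid_absent: "x \<notin> tverts C" if "C |\<in>| Cs" for C
    using Node.prems tverts_kid_subset[OF that] by blast
  have "w \<noteq> x"
    using Node.prems by (auto simp: tverts_Node)
  show ?case
    unfolding is_leaf_label_def
  proof (intro allI impI)
    fix Xs
    assume sub: "subtree_of (Node x Xs) (add_leaf x a (Node w Cs))"
    show "Xs = {||}"
    proof (cases "w = a")
      case True
      then obtain C where "C |\<in>| finsert (Node x {||}) Cs" "subtree_of (Node x Xs) C"
        using sub \<open>w \<noteq> x\<close> by (auto simp: add_leaf_Node subtree_of_Node_iff)
      then show ?thesis
        using kid_absent subtree_of_root_in_tverts by (fastforce simp: subtree_of_Node_iff)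
    next
      case False
      then obtain C where "C |\<in>| Cs" "subtree_of (Node x Xs) (add_leaf x a C)"
        using sub \<open>w \<noteq> x\<close> by (auto simp: add_leaf_Node subtree_of_Node_iff)
      then show ?thesis
        using Node.IH kid_absent unfolding is_leaf_label_def by blast
    qed
  qed
qed

definition rotate_up :: "('a \<Rightarrow> 'a \<Rightarrow> bool) \<Rightarrow> 'a \<Rightarrow> 'a rtree fset \<Rightarrow> 'a \<Rightarrow> 'a rtree fset \<Rightarrow> 'a rtree" where
  "rotate_up R u Cs v Ds =
    Node v (ffilter (\<lambda>S. \<not> touches R u S) Ds |\<union>|
      {|Node u ((Cs |-| {|Node v Ds|}) |\<union>| ffilter (touches R u) Ds)|})"

lemma rotation_at_root: "Node v Ds |\<in>| Cs \<Longrightarrow> rotation R u v (Node u Cs) (rotate_up R u Cs v Ds)"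
  unfolding rotate_up_def by (rule rotation.at_u)

lemma tverts_Node_split:
  "C |\<in>| Cs \<Longrightarrow> tverts (Node r Cs) = insert r (tverts C \<union> (\<Union>D\<in>fset (Cs |-| {|C|}). tverts D))"
  by (auto simp: tverts_Node)

lemma rotation_tverts:
  "rotation R u v T T' \<Longrightarrow> tverts T' = tverts T \<and> u \<in> tverts T \<and> v \<in> tverts T"
proof (induction rule: rotation.induct)
  case (at_u v Ds Cs u)
  show ?case
    unfolding tverts_Node_split[OF at_u] tverts_Node[of v Ds] by (auto simp: tverts_Node)
next
  case (below C Cs u v C' w)
  then show ?case
    unfolding tverts_Node_split[OF below(1)] by (auto simp: tverts_Node)
qed

lemma rotation_cong:
  "rotation R1 u v T T' \<Longrightarrow> (\<And>p q. p \<in> tverts T \<Longrightarrow> q \<in> tverts T \<Longrightarrow> R1 p q = R2 p q) \<Longrightarrow>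
   rotation R2 u v T T'"
proof (induction rule: rotation.induct)
  case (at_u v Ds Cs u)
  have "touches R1 u S = touches R2 u S" if "S |\<in>| Ds" for S
  proof -
    have "tverts S \<subseteq> tverts (Node u Cs)"
      using tverts_kid_subset[OF at_u(1)] tverts_kid_subset[OF that] by blast
    moreover have "u \<in> tverts (Node u Cs)"
      by (simp add: tverts_Node)
    ultimately show ?thesis
      unfolding touches_def using at_u.prems by blast
  qed
  then have "ffilter (touches R1 u) Ds = ffilter (touches R2 u) Ds"
    "ffilter (\<lambda>S. \<not> touches R1 u S) Ds = ffilter (\<lambda>S. \<not> touches R2 u S) Ds"
    by (auto simp: eq_ffilter)
  then show ?case
    using rotation.at_u[OF at_u(1), of R2] by simp
next
  case (below C Cs u v C' w)
  then show ?case
    using tverts_kid_subset[OF below(1)] by (meson rotation.below subsetD)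
qed

lemma rotation_deterministic:
  "rotation R u v T T1 \<Longrightarrow> distinct_labels T \<Longrightarrow> rotation R u v T T2 \<Longrightarrow> T1 = T2"
proof (induction arbitrary: T2 rule: rotation.induct)
  case (at_u v Ds Cs u)
  from at_u.prems(2) show ?case
  proof (cases rule: rotation.cases)
    case (at_u Ds2)
    have "v \<in> tverts (Node v Ds)" "v \<in> tverts (Node v Ds2)"
      by (simp_all add: tverts_Node)
    then have "Node v Ds2 = Node v Ds"
      using distinct_labels_kid_eq[OF at_u.prems(1) at_u(2)] \<open>Node v Ds |\<in>| Cs\<close> by blast
    then show ?thesis
      using at_u by simp
  next
    case (below C C')
    have "u \<in> tverts C"
      using rotation_tverts[OF below(3)] by blast
    then show ?thesis
      using at_u.prems(1) below(2) unfolding distinct_labels_Node by blast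
  qed
next
  case (below C Cs u v C' w)
  have "u \<in> tverts C"
    using rotation_tverts[OF below(2)] by blast
  from below.prems(2) show ?case
  proof (cases rule: rotation.cases)
    case (at_u Ds)
    then show ?thesis
      using below.prems(1) below(1) \<open>u \<in> tverts C\<close> unfolding distinct_labels_Node by blast
  next
    case (below C2 C2')
    have "C2 = C"
      using distinct_labels_kid_eq[OF below.prems(1) below(2) \<open>C |\<in>| Cs\<close>]
        rotation_tverts[OF below(3)] \<open>u \<in> tverts C\<close> by blast
    moreover have "distinct_labels C"
      using distinct_labels_kidD[OF below.prems(1) \<open>C |\<in>| Cs\<close>] by blast
    ultimately show ?thesis
      using below below.IH by simp
  qed
qed

lemma rotation_not_leaf_label: "rotation R u v T T' \<Longrightarrow> \<not> is_leaf_label v T'"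
proof (induction rule: rotation.induct)
  case (at_u v Ds Cs u)
  show ?case
    unfolding is_leaf_label_def using subtree_of.refl by fastforce
next
  case (below C Cs u v C' w)
  then obtain Vs where "subtree_of (Node v Vs) C'" "Vs \<noteq> {||}"
    unfolding is_leaf_label_def by blast
  then show ?case
    unfolding is_leaf_label_def by (meson finsertI1 subtree_of.kid)
qed

lemma rotation_single_kid:
  "rotation R u v (Node y {|T|}) S \<Longrightarrow>
   root T = v \<and> root S = v \<or> (\<exists>T'. rotation R u v T T' \<and> S = Node y {|T'|})"
  by (erule rotation.cases) auto

lemma no_rotation_at_leaf: "\<not> rotation R u v (Node y {||}) S"
  by (auto elim: rotation.cases)

lemma rotation_path_at_root:
  fixes R :: "'a \<Rightarrow> 'a \<Rightarrow> bool"
  assumes "Node v Ds |\<in>| Cs" "path_to (Node u Cs) a p"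
  shows "\<exists>p'. path_to (rotate_up R u Cs v Ds) a p' \<and> set p - {u} \<subseteq> set p' \<and>
    (u \<in> set p \<longrightarrow> u \<notin> set p' \<longrightarrow> a = v \<or> \<not> R u a)"
proof -
  define A where "A = ffilter (\<lambda>S. \<not> touches R u S) Ds"
  define B where "B = (Cs |-| {|Node v Ds|}) |\<union>| ffilter (touches R u) Ds"
  have rotated: "rotate_up R u Cs v Ds = Node v (A |\<union>| {|Node u B|})"
    unfolding rotate_up_def A_def B_def by simp
  have u_kid: "Node u B |\<in>| A |\<union>| {|Node u B|}"
    by simp
  have via_u: "path_to (Node v (A |\<union>| {|Node u B|})) a (v # u # q)"
    if "C |\<in>| B" "path_to C a q" for C q
    using path_to.down[OF u_kid path_to.down[OF that]] .
  consider "a = u" "p = [u]" | C q where "C |\<in>| Cs" "path_to C a q" "p = u # q"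
    using assms(2) unfolding path_to_Node by blast
  then have "\<exists>p'. path_to (Node v (A |\<union>| {|Node u B|})) a p' \<and> set p - {u} \<subseteq> set p' \<and>
    (u \<in> set p \<longrightarrow> u \<notin> set p' \<longrightarrow> a = v \<or> \<not> R u a)"
  proof cases
    case 1
    then show ?thesis
      using path_to.down[OF u_kid path_to.here] by (intro exI[of _ "[v, u]"]) auto
  next
    case (2 C q)
    show ?thesis
    proof (cases "C = Node v Ds")
      case False
      then have "C |\<in>| B"
        unfolding B_def using 2(1) by simp
      then show ?thesis
        using via_u 2 by (intro exI[of _ "v # u # q"]) auto
    next
      case True
      with 2(2) have "path_to (Node v Ds) a q"
        by simp
      then consider "a = v" "q = [v]" | D q' where "D |\<in>| Ds" "path_to D a q'" "q = v # q'"
        unfolding path_to_Node by blast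
      then show ?thesis
      proof cases
        case 1
        then show ?thesis
          using 2(3) path_to.here by (intro exI[of _ "[v]"]) auto
      next
        case (2 D q')
        show ?thesis
        proof (cases "touches R u D")
          case True
          then have "D |\<in>| B"
            unfolding B_def using 2(1) by simp
          then show ?thesis
            using via_u 2 \<open>p = u # q\<close> by (intro exI[of _ "v # u # q'"]) auto
        next
          case False
          then have "D |\<in>| A |\<union>| {|Node u B|}"
            unfolding A_def using 2(1) by simp
          then have "path_to (Node v (A |\<union>| {|Node u B|})) a (v # q')"
            using 2(2) by (rule path_to.down)
          moreover have "\<not> R u a"
            using False path_toD[OF 2(2)] unfolding touches_def by blast
          ultimately show ?thesis
            using 2 \<open>p = u # q\<close> by (intro exI[of _ "v # q'"]) auto
        qed
      qed
    qed
  qed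
  then show ?thesis
    unfolding rotated .
qed

lemma rotation_path:
  "rotation R u v T T' \<Longrightarrow> path_to T a p \<Longrightarrow>
   \<exists>p'. path_to T' a p' \<and> set p - {u} \<subseteq> set p' \<and> (u \<in> set p \<longrightarrow> u \<notin> set p' \<longrightarrow> a = v \<or> \<not> R u a)"
proof (induction arbitrary: a p rule: rotation.induct)
  case (at_u v Ds Cs u)
  show ?case
    by (rule rotation_path_at_root[OF at_u.hyps at_u.prems, unfolded rotate_up_def])
next
  case (below C Cs u v C' w)
  let ?Cs' = "finsert C' (Cs |-| {|C|})"
  consider "a = w" "p = [w]" | C2 q where "C2 |\<in>| Cs" "path_to C2 a q" "p = w # q"
    using below.prems unfolding path_to_Node by blast
  then show ?case
  proof cases
    case 1
    then show ?thesis
      using path_to.here[of w ?Cs'] by (intro exI[of _ "[w]"]) auto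
  next
    case (2 C2 q)
    show ?thesis
    proof (cases "C2 = C")
      case True
      then obtain q' where q': "path_to C' a q'" "set q - {u} \<subseteq> set q'"
        "u \<in> set q \<longrightarrow> u \<notin> set q' \<longrightarrow> a = v \<or> \<not> R u a"
        using below.IH 2(2) by blast
      have "path_to (Node w ?Cs') a (w # q')"
        by (rule path_to.down[OF _ q'(1)]) simp
      then show ?thesis
        using q' 2(3) by (intro exI[of _ "w # q'"]) auto
    next
      case False
      then have "path_to (Node w ?Cs') a (w # q)"
        using 2 by (intro path_to.down) auto
      then show ?thesis
        using 2(3) by (intro exI[of _ "w # q"]) auto
    qed
  qed
qed

lemma rotation_path_to_lower:
  "rotation R u v T T' \<Longrightarrow> distinct_labels T \<Longrightarrow> path_to T v p \<Longrightarrow>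
   \<exists>p'. path_to T' u p' \<and> set p \<subseteq> set p'"
proof (induction arbitrary: p rule: rotation.induct)
  case (at_u v Ds Cs u)
  have dl: "distinct_labels (Node v Ds)" "u \<notin> tverts (Node v Ds)"
    using distinct_labels_kidD[OF at_u.prems(1) at_u.hyps] by blast+
  then have "v \<noteq> u"
    by (auto simp: tverts_Node)
  then obtain C q where C: "C |\<in>| Cs" "path_to C v q" "p = u # q"
    using at_u.prems(2) unfolding path_to_Node by blast
  have "C = Node v Ds"
    using distinct_labels_kid_eq[OF at_u.prems(1) C(1) at_u.hyps] path_toD[OF C(2)]
    by (auto simp: tverts_Node)
  with C(2) have "path_to (Node v Ds) v q"
    by simp
  then have "q = [v] \<or> (\<exists>D q2. D |\<in>| Ds \<and> path_to D v q2 \<and> q = v # q2)"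
    unfolding path_to_Node by simp
  moreover have "\<not> path_to D v q2" if "D |\<in>| Ds" for D q2
    using distinct_labels_kidD[OF dl(1) that] path_toD[of D v q2] by blast
  ultimately have "q = [v]"
    by blast
  moreover have "path_to (rotate_up R u Cs v Ds) u [v, u]"
    unfolding rotate_up_def by (rule path_to.down[OF _ path_to.here[of u]]) (rule funionI2, simp)
  ultimately show ?case
    using C(3) unfolding rotate_up_def by (intro exI[of _ "[v, u]"]) auto
next
  case (below C Cs u v C' w)
  have "v \<in> tverts C"
    using rotation_tverts[OF below.hyps(2)] by blast
  moreover have "distinct_labels C" "w \<notin> tverts C"
    using distinct_labels_kidD[OF below.prems(1) below.hyps(1)] by blast+
  ultimately obtain C2 q where C2: "C2 |\<in>| Cs" "path_to C2 v q" "p = w # q"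
    using below.prems(2) unfolding path_to_Node by blast
  have "C2 = C"
    using distinct_labels_kid_eq[OF below.prems(1) C2(1) below.hyps(1)] path_toD[OF C2(2)]
      \<open>v \<in> tverts C\<close> by blast
  then obtain q' where q': "path_to C' u q'" "set q \<subseteq> set q'"
    using below.IH \<open>distinct_labels C\<close> C2(2) by blast
  have "path_to (Node w (finsert C' (Cs |-| {|C|}))) u (w # q')"
    by (rule path_to.down[OF _ q'(1)]) simp
  then show ?case
    using q' C2(3) by (intro exI[of _ "w # q'"]) auto
qed

section \<open>Rotations commute with hanging a leaf\<close>

lemma touches_add_leaf:
  assumes "\<And>w. w \<in> tverts S \<Longrightarrow> E' u w = E u w" and "E' u x \<Longrightarrow> E u a"
  shows "touches E' u (add_leaf x a S) = touches E u S"
proof (cases "a \<in> tverts S")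
  case True
  then have "touches E' u (add_leaf x a S) \<longleftrightarrow> E' u x \<or> touches E u S"
    unfolding touches_def tverts_add_leaf[OF True] using assms(1) by auto
  then show ?thesis
    using assms(2) True unfolding touches_def by blast
next
  case False
  then show ?thesis
    using assms(1) by (simp add: add_leaf_absent touches_def)
qed

context
  fixes E E' :: "'a \<Rightarrow> 'a \<Rightarrow> bool" and x u v :: 'a and Cs Ds :: "'a rtree fset"
  assumes kid: "Node v Ds |\<in>| Cs" and distinct: "distinct_labels (Node u Cs)"
    and fresh: "x \<notin> tverts (Node u Cs)"
    and agree: "\<And>w. w \<in> tverts (Node u Cs) \<Longrightarrow> E' u w = E u w"
begin

private lemma grandkid_subset: "D |\<in>| Ds \<Longrightarrow> tverts D \<subseteq> tverts (Node u Cs)"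
  using tverts_kid_subset[OF kid] tverts_kid_subset[of D Ds v] by blast

private lemma u_notin_grandkid: "D |\<in>| Ds \<Longrightarrow> u \<notin> tverts D"
  using distinct_labels_kidD[OF distinct kid] tverts_kid_subset[of D Ds v] by blast

private lemma v_neq_u: "v \<noteq> u"
  using distinct_labels_kidD[OF distinct kid] by (auto simp: tverts_Node)

private lemma v_neq_x: "v \<noteq> x"
  using fresh tverts_kid_subset[OF kid] by (auto simp: tverts_Node)

private lemma touches_grandkid: "D |\<in>| Ds \<Longrightarrow> touches E' u D = touches E u D"
  using agree grandkid_subset unfolding touches_def by blast

private lemma ffilter_touches_agree:
  "ffilter (touches E' u) Ds = ffilter (touches E u) Ds"
  "ffilter (\<lambda>S. \<not> touches E' u S) Ds = ffilter (\<lambda>S. \<not> touches E u S) Ds"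
  using touches_grandkid by (simp_all add: eq_ffilter)

private lemma add_leaf_upper_ffilter: "add_leaf x u |`| ffilter P Ds = ffilter P Ds"
  using u_notin_grandkid by (intro fset.map_ident_strong add_leaf_absent) simp

lemma rotation_add_leaf_at_upper:
  "rotation E' u v (add_leaf x u (Node u Cs)) (add_leaf x u (rotate_up E u Cs v Ds))"
proof -
  define X where "X = Node x ({||} :: 'a rtree fset)"
  have "rotation E' u v (Node u (finsert X Cs)) (rotate_up E' u (finsert X Cs) v Ds)"
    using kid by (intro rotation_at_root) simp
  moreover have "finsert X Cs |-| {|Node v Ds|} = finsert X (Cs |-| {|Node v Ds|})"
    using v_neq_x unfolding X_def by auto
  ultimately show ?thesis
    using v_neq_u add_leaf_upper_ffilter
    by (simp add: add_leaf_Node rotate_up_def X_def ffilter_touches_agree fimage_funion)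
qed

lemma rotation_add_leaf_at_lower:
  "rotation E' u v (add_leaf x v (Node u Cs)) (add_leaf x (if E' u x then u else v) (rotate_up E u Cs v Ds))"
proof -
  define X where "X = Node x ({||} :: 'a rtree fset)"
  define N' where "N' = Node v (finsert X Ds)"
  have leaf_at_v: "add_leaf x v (Node u Cs) = Node u (finsert N' (Cs |-| {|Node v Ds|}))"
    using add_leaf_kids[OF distinct kid] v_neq_u
    by (simp add: add_leaf_Node tverts_Node N'_def X_def)
  have "N' |\<notin>| Cs"
    using fresh tverts_kid_subset[of N' Cs u] unfolding N'_def X_def by (auto simp: tverts_Node)
  then have rest: "finsert N' (Cs |-| {|Node v Ds|}) |-| {|N'|} = Cs |-| {|Node v Ds|}"
    by auto
  have touches_X: "touches E' u X \<longleftrightarrow> E' u x"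
    unfolding touches_def X_def by simp
  have "rotation E' u v (add_leaf x v (Node u Cs))
      (rotate_up E' u (finsert N' (Cs |-| {|Node v Ds|})) v (finsert X Ds))"
    unfolding leaf_at_v N'_def by (rule rotation_at_root) simp
  then show ?thesis
    using rest touches_X v_neq_u add_leaf_upper_ffilter unfolding N'_def
    by (auto simp: rotate_up_def add_leaf_Node X_def ffilter_touches_agree fimage_funion ffilter_finsert
        finsert_commute)
qed

lemma rotation_add_leaf_away:
  assumes "a \<noteq> u" "a \<noteq> v" "E' u x \<Longrightarrow> E u a"
  shows "rotation E' u v (add_leaf x a (Node u Cs)) (add_leaf x a (rotate_up E u Cs v Ds))"
proof -
  define f where "f = add_leaf x a"
  have kid': "Node v (f |`| Ds) |\<in>| f |`| Cs"
    using kid assms(2) unfolding f_def by (metis add_leaf_Node fimageI)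
  have touches_f: "touches E' u (f D) = touches E u D" if "D |\<in>| Ds" for D
    unfolding f_def
  proof (rule touches_add_leaf)
    show "E' u w = E u w" if "w \<in> tverts D" for w
      using agree grandkid_subset[OF \<open>D |\<in>| Ds\<close>] that by blast
  qed (rule assms(3))
  then have "ffilter (\<lambda>y. touches E' u (f y)) Ds = ffilter (touches E u) Ds"
    "ffilter (\<lambda>y. \<not> touches E' u (f y)) Ds = ffilter (\<lambda>S. \<not> touches E u S) Ds"
    by (simp_all add: eq_ffilter)
  then have "ffilter (touches E' u) (f |`| Ds) = f |`| ffilter (touches E u) Ds"
    "ffilter (\<lambda>S. \<not> touches E' u S) (f |`| Ds) = f |`| ffilter (\<lambda>S. \<not> touches E u S) Ds"
    unfolding ffilter_fimage by simp_all
  moreover have "f |`| Cs |-| {|f (Node v Ds)|} = f |`| (Cs |-| {|Node v Ds|})"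
  proof (rule fimage_fminus_singleton)
    fix D
    assume "D |\<in>| Cs" "f D = f (Node v Ds)"
    moreover have "x \<notin> tverts C" if "C |\<in>| Cs" for C
      using fresh tverts_kid_subset[OF that] by blast
    ultimately show "D = Node v Ds"
      using add_leaf_inj kid unfolding f_def by metis
  qed
  ultimately show ?thesis
    using rotation_at_root[OF kid', of E' u] assms(1,2)
    by (simp add: f_def add_leaf_Node rotate_up_def fimage_funion)
qed

end

lemma rotation_add_leaf_below:
  assumes kid: "C |\<in>| Cs" and rot: "rotation R u v C C'"
    and distinct: "distinct_labels (Node w Cs)" and fresh: "x \<notin> tverts (Node w Cs)"
    and a': "a' = a \<or> a = v \<and> a' = u"
    and rotation_kid: "rotation E' u v (add_leaf x a C) (add_leaf x a' C')"
  shows "rotation E' u v (add_leaf x a (Node w Cs)) (add_leaf x a' (Node w (finsert C' (Cs |-| {|C|}))))"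
proof -
  have C: "w \<notin> tverts C" "x \<notin> tverts C"
    using distinct_labels_kidD[OF distinct kid] fresh tverts_kid_subset[OF kid] by blast+
  have C': "tverts C' = tverts C" "u \<in> tverts C" "v \<in> tverts C"
    using rotation_tverts[OF rot] by blast+
  show ?thesis
  proof (cases "w = a")
    case True
    define X where "X = Node x ({||} :: 'a rtree fset)"
    have "a' = a" "add_leaf x a C = C" "add_leaf x a' C' = C'"
      using True C(1) C' a' by (auto simp: add_leaf_absent)
    moreover have "X \<noteq> C"
      using C(2) unfolding X_def by (auto simp: tverts_Node)
    moreover have "rotation E' u v (Node w (finsert X Cs)) (Node w (finsert C' (finsert X Cs |-| {|C|})))"
      using kid rotation_kid calculation by (intro rotation.below) auto
    moreover have "finsert X Cs |-| {|C|} = finsert X (Cs |-| {|C|})"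
      using \<open>X \<noteq> C\<close> by auto
    ultimately show ?thesis
      using True by (simp add: add_leaf_Node X_def finsert_commute)
  next
    case False
    have "w \<noteq> a'"
      using False C(1) C'(2) a' by auto
    have others: "add_leaf x a' D = add_leaf x a D" if "D |\<in>| Cs |-| {|C|}" for D
    proof -
      have "D |\<in>| Cs" "D \<noteq> C"
        using that by auto
      then have "u \<notin> tverts D" "v \<notin> tverts D"
        using distinct_labels_kid_eq[OF distinct \<open>D |\<in>| Cs\<close> kid] C'(2,3) by blast+
      then show ?thesis
        using a' by (auto simp: add_leaf_absent)
    qed
    have "add_leaf x a |`| Cs |-| {|add_leaf x a C|} = add_leaf x a |`| (Cs |-| {|C|})"
    proof (rule fimage_fminus_singleton)
      fix D
      assume "D |\<in>| Cs" "add_leaf x a D = add_leaf x a C"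
      moreover have "x \<notin> tverts D"
        using fresh tverts_kid_subset[OF \<open>D |\<in>| Cs\<close>] by blast
      ultimately show "D = C"
        using add_leaf_inj[of x D C a] C(2) by blast
    qed
    also have "\<dots> = add_leaf x a' |`| (Cs |-| {|C|})"
      using others by (intro fimage_cong) simp_all
    finally have "rotation E' u v (Node w (add_leaf x a |`| Cs))
        (Node w (finsert (add_leaf x a' C') (add_leaf x a' |`| (Cs |-| {|C|}))))"
      using rotation.below[OF _ rotation_kid, of "add_leaf x a |`| Cs" w] kid by simp
    then show ?thesis
      using False \<open>w \<noteq> a'\<close> by (simp add: add_leaf_Node)
  qed
qed

text \<open>The last hypothesis ensures that hanging \<open>x\<close> below \<open>a\<close> never changes which subtrees
  of \<open>v\<close> touch \<open>u\<close>.\<close>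

lemma rotation_add_leaf:
  assumes "rotation E u v T T'" "distinct_labels T" "x \<notin> tverts T"
    and "\<And>p q. p \<in> tverts T \<Longrightarrow> q \<in> tverts T \<Longrightarrow> E' p q = E p q"
    and "\<And>w. w \<in> tverts T \<Longrightarrow> E' w x \<Longrightarrow> w \<noteq> a \<Longrightarrow> E w a"
  shows "rotation E' u v (add_leaf x a T) (add_leaf x (if a = v \<and> E' u x then u else a) T')"
  using assms
proof (induction rule: rotation.induct)
  case (at_u v Ds Cs u)
  have u_in: "u \<in> tverts (Node u Cs)"
    by (simp add: tverts_Node)
  have agree: "E' u w = E u w" if "w \<in> tverts (Node u Cs)" for w
    using at_u.prems(3) u_in that by blast
  have "v \<noteq> u"
    using distinct_labels_kidD[OF at_u.prems(1) at_u.hyps] by (auto simp: tverts_Node)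
  consider "a = u" | "a = v" | "a \<noteq> u" "a \<noteq> v"
    by blast
  then show ?case
  proof cases
    case 1
    then show ?thesis
      using rotation_add_leaf_at_upper[where E=E and E'=E', OF at_u.hyps at_u.prems(1,2) agree] \<open>v \<noteq> u\<close>
      by (simp add: rotate_up_def)
  next
    case 2
    then show ?thesis
      using rotation_add_leaf_at_lower[where E=E and E'=E', OF at_u.hyps at_u.prems(1,2) agree]
      by (simp add: rotate_up_def split: if_splits)
  next
    case 3
    then show ?thesis
      using rotation_add_leaf_away[where E=E and E'=E', OF at_u.hyps at_u.prems(1,2) agree 3] at_u.prems(4)[OF u_in]
      by (simp add: rotate_up_def)
  qed
next
  case (below C Cs u v C' w)
  define a' where "a' = (if a = v \<and> E' u x then u else a)"
  have C: "distinct_labels C" "x \<notin> tverts C" "tverts C \<subseteq> tverts (Node w Cs)"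
    using distinct_labels_kidD[OF below.prems(1) below.hyps(1)] below.prems(2)
      tverts_kid_subset[OF below.hyps(1)] by blast+
  have "rotation E' u v (add_leaf x a C) (add_leaf x a' C')"
  proof (cases "a \<in> tverts C")
    case True
    then show ?thesis
      unfolding a'_def using below.IH C below.prems(3,4) by (meson subsetD)
  next
    case False
    then have "a' = a"
      using rotation_tverts[OF below.hyps(2)] by (auto simp: a'_def)
    moreover have "rotation E' u v C C'"
      using rotation_cong[OF below.hyps(2)] below.prems(3) C(3) by blast
    ultimately show ?thesis
      using False rotation_tverts[OF below.hyps(2)] by (simp add: add_leaf_absent)
  qed
  then show ?case
    using rotation_add_leaf_below[OF below.hyps below.prems(1,2)] unfolding a'_def by auto
qed

lemma rotation_of_add_leaf:
  "rotation R' u v S0 S \<Longrightarrow> S0 = add_leaf x a T \<Longrightarrow> distinct_labels T \<Longrightarrow> v \<noteq> x \<Longrightarrow>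
   \<exists>T'. rotation R u v T T'"
proof (induction arbitrary: T rule: rotation.induct)
  case (at_u v Ds Cs u)
  obtain r Cs' where T: "T = Node r Cs'"
    by (cases T)
  have "u = r \<and> (\<exists>Ds'. Node v Ds' |\<in>| Cs')"
  proof (cases "r = a")
    case True
    then have "u = r" "Cs = finsert (Node x {||}) Cs'"
      using at_u.prems(1) T by (simp_all add: add_leaf_Node)
    then show ?thesis
      using at_u.hyps at_u.prems(3) by auto
  next
    case False
    then have "u = r" "Cs = add_leaf x a |`| Cs'"
      using at_u.prems(1) T by (simp_all add: add_leaf_Node)
    then obtain D where "D |\<in>| Cs'" "Node v Ds = add_leaf x a D"
      using at_u.hyps by auto
    moreover obtain v' Ds' where "D = Node v' Ds'"
      by (cases D)
    ultimately show ?thesis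
      using \<open>u = r\<close> by (metis root_add_leaf rtree.sel(1))
  qed
  then obtain Ds' where "u = r" "Node v Ds' |\<in>| Cs'"
    by blast
  with rotation_at_root[OF this(2), of R r] show ?case
    using T by blast
next
  case (below C Cs u v C' w)
  obtain r Cs' where T: "T = Node r Cs'"
    by (cases T)
  have "\<exists>D. D |\<in>| Cs' \<and> C = add_leaf x a D"
  proof (cases "r = a")
    case True
    then have "C |\<in>| finsert (Node x {||}) Cs'"
      using below.hyps(1) below.prems(1) T by (simp add: add_leaf_Node)
    moreover have "C \<noteq> Node x {||}"
      using below.hyps(2) no_rotation_at_leaf by metis
    ultimately have "C |\<in>| Cs'"
      by simp
    moreover have "a \<notin> tverts C"
      using distinct_labels_kidD[OF below.prems(2)[unfolded T] calculation] True by blast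
    ultimately show ?thesis
      using add_leaf_absent by metis
  next
    case False
    then have "C |\<in>| add_leaf x a |`| Cs'"
      using below.hyps(1) below.prems(1) T by (simp add: add_leaf_Node)
    then show ?thesis
      by blast
  qed
  then obtain D where D: "D |\<in>| Cs'" "C = add_leaf x a D"
    by blast
  moreover have "distinct_labels D"
    using distinct_labels_kidD[of r Cs' D] below.prems(2) T D(1) by simp
  ultimately obtain D' where "rotation R u v D D'"
    using below.IH[OF D(2) _ below.prems(3)] by blast
  then show ?case
    unfolding T by (intro exI) (rule rotation.below[OF D(1)])
qed

section \<open>The deepest vertex of a clique\<close>

lemma clique_on_root_path:
  assumes T: "search_tree R S T" "symp R"
    and K: "is_clique K R" "K \<subseteq> S" "finite K" "K \<noteq> {}"
  shows "\<exists>a p. a \<in> K \<and> path_to T a p \<and> K \<subseteq> set p"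
proof -
  have "tverts T = S" "distinct_labels T"
    using search_tree_tverts_distinct_labels[OF T] by blast+
  have "Max (depth T ` K) \<in> depth T ` K"
    using K(3,4) by (intro Max_in) simp_all
  then obtain a where "a \<in> K" "depth T a = Max (depth T ` K)"
    by (metis imageE)
  then have a: "a \<in> K" "\<And>k. k \<in> K \<Longrightarrow> depth T k \<le> depth T a"
    using K(3) by (simp, metis Max_ge finite_imageI imageI)
  have in_T: "k \<in> tverts T" if "k \<in> K" for k
    using K(2) that \<open>tverts T = S\<close> by blast
  obtain p where p: "path_to T a p"
    using path_to_exists[OF in_T[OF a(1)]] by blast
  have "k \<in> set p" if k: "k \<in> K" "k \<noteq> a" for k
  proof -
    obtain q where q: "path_to T k q"
      using path_to_exists[OF in_T[OF k(1)]] by blast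
    have "a \<notin> set q"
      using depth_less_if_on_path[OF \<open>distinct_labels T\<close> q] a(2)[OF k(1)] k(2) by fastforce
    moreover have "R k a"
      using K(1) a(1) k unfolding is_clique_def by blast
    ultimately show ?thesis
      using search_tree_adjacent_comparable[OF T _ _ _ q p] a(1) k(1) K(2) by blast
  qed
  moreover have "a \<in> set p"
    using path_toD[OF p] last_in_set by metis
  ultimately show ?thesis
    using a(1) p by blast
qed

lemma v_lam_eqI:
  assumes "distinct_labels T" "finite K" "a \<in> K" "path_to T a p" "K \<subseteq> set p"
  shows "v_lam K T = a \<and> lam K T = depth T a"
proof -
  have below_a: "depth T k < depth T a" if "k \<in> K" "k \<noteq> a" for k
    using depth_less_if_on_path[OF assms(1,4)] assms(5) that by blast
  have lam: "lam K T = depth T a"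
    unfolding lam_def
  proof (rule Max_eqI)
    show "y \<le> depth T a" if "y \<in> depth T ` K" for y
      using that below_a by fastforce
  qed (use assms(2,3) in auto)
  moreover have "v_lam K T = a"
    unfolding v_lam_def
  proof (rule the_equality)
    show "u = a" if "u \<in> K \<and> depth T u = lam K T" for u
      using that below_a[of u] lam by fastforce
  qed (use assms(3) lam in simp)
  ultimately show ?thesis
    by simp
qed

lemma clique_on_root_path_rotation:
  assumes "rotation R u v T T'" "distinct_labels T" "is_clique K R"
    and "a \<in> K" "path_to T a p" "K \<subseteq> set p"
  shows "\<exists>p'. path_to T' (if a = v \<and> u \<in> K then u else a) p' \<and> K \<subseteq> set p'"
proof (cases "a = v \<and> u \<in> K")
  case True
  then show ?thesis
    using rotation_path_to_lower[OF assms(1,2)] assms(5,6) by fastforce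
next
  case False
  obtain p' where p': "path_to T' a p'" "set p - {u} \<subseteq> set p'"
    "u \<in> set p \<longrightarrow> u \<notin> set p' \<longrightarrow> a = v \<or> \<not> R u a"
    using rotation_path[OF assms(1,5)] by blast
  have "u \<in> set p'" if "u \<in> K"
  proof (rule ccontr)
    assume "u \<notin> set p'"
    moreover have "a \<in> set p'"
      using path_toD[OF p'(1)] last_in_set by metis
    ultimately have "u \<noteq> a"
      by blast
    then have "R u a"
      using assms(3,4) that unfolding is_clique_def by blast
    then show False
      using p'(3) \<open>u \<notin> set p'\<close> False that assms(6) by blast
  qed
  then have "K \<subseteq> set p'"
    using assms(6) p'(2) by blast
  then show ?thesis
    using False p'(1) by auto
qed

lemma induces_copy_ofI:
  assumes "\<And>T. T \<in> rot_verts V E \<Longrightarrow> \<phi> T \<in> rot_verts V' E'"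
    and "inj_on \<phi> (rot_verts V E)"
    and "\<And>T T' u v. T \<in> rot_verts V E \<Longrightarrow> T' \<in> rot_verts V E \<Longrightarrow> rotation E u v T T' \<Longrightarrow>
      \<exists>u' v'. rotation E' u' v' (\<phi> T) (\<phi> T')"
    and "\<And>T T' u v. T \<in> rot_verts V E \<Longrightarrow> T' \<in> rot_verts V E \<Longrightarrow> rotation E' u v (\<phi> T) (\<phi> T') \<Longrightarrow>
      \<exists>u' v'. rotation E u' v' T T'"
  shows "induces_copy_of (\<phi> ` rot_verts V E) V' E' V E"
  unfolding induces_copy_of_def rot_adj_def
  using assms by (intro conjI exI[of _ \<phi>] inj_on_imp_bij_betw image_subsetI ballI iffI) blast+

section \<open>Adding a vertex adjacent to a clique\<close>

locale clique_extension =
  fixes V :: "'a set" and E :: "'a \<Rightarrow> 'a \<Rightarrow> bool" and K :: "'a set" and x :: 'a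
  assumes graph: "graph V E" and connected: "connected_on V E"
    and K_subset: "K \<subseteq> V" and K_nonempty: "K \<noteq> {}" and clique: "is_clique K E"
    and x_fresh: "x \<notin> V"
begin

abbreviation EK :: "'a \<Rightarrow> 'a \<Rightarrow> bool" where
  "EK \<equiv> add_vertex_edges E K x"

lemma edge_in_V: "E p q \<Longrightarrow> p \<in> V \<and> q \<in> V \<and> E q p"
  using graph unfolding graph_def by blast

lemma finite_K: "finite K"
  using graph K_subset finite_subset unfolding graph_def by blast

lemma symp_E: "symp E"
  using edge_in_V by (blast intro: sympI)

lemma symp_EK: "symp EK"
  unfolding add_vertex_edges_def using edge_in_V by (blast intro: sympI)

lemma x_notin_K: "x \<notin> K"
  using K_subset x_fresh by blast

lemma EK_iff: "EK p q \<longleftrightarrow> E p q \<or> (p = x \<and> q \<in> K) \<or> (q = x \<and> p \<in> K)"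
  unfolding add_vertex_edges_def ..

lemma EK_eq_E: "p \<noteq> x \<Longrightarrow> q \<noteq> x \<Longrightarrow> EK p q = E p q"
  unfolding EK_iff by blast

lemma EK_x_iff: "p \<noteq> x \<Longrightarrow> EK p x \<longleftrightarrow> p \<in> K"
  unfolding EK_iff using edge_in_V x_fresh by blast

lemma search_tree_EK: "search_tree E W T \<Longrightarrow> W \<subseteq> V \<Longrightarrow> search_tree EK W T"
  by (erule search_tree_cong) (metis EK_eq_E subsetD x_fresh)

lemma components_on_EK: "x \<notin> S \<Longrightarrow> components_on S EK = components_on S E"
  by (rule components_on_cong) (metis EK_eq_E)

lemma reach_in_insert_EK: "reach_in S E a b \<Longrightarrow> reach_in (insert x S) EK a b"
  by (erule reach_in_mono) (auto simp: EK_iff)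

lemma components_on_insert_isolated:
  assumes S: "S \<subseteq> V" and no_K: "K \<inter> S = {}"
  shows "components_on (insert x S) EK = insert {x} (components_on S E)"
proof (rule components_on_eqI)
  fix Q a b
  assume Q: "Q \<in> insert {x} (components_on S E)" and "a \<in> Q" "EK a b" "b \<in> insert x S"
  show "b \<in> Q"
  proof (cases "Q = {x}")
    case True
    then have "a = x"
      using \<open>a \<in> Q\<close> by simp
    then have "b \<in> K"
      using \<open>EK a b\<close> edge_in_V x_fresh unfolding EK_iff by blast
    then show ?thesis
      using \<open>b \<in> insert x S\<close> no_K x_notin_K by blast
  next
    case False
    then have comp: "Q \<in> components_on S E"
      using Q by blast
    then have "a \<in> S" "a \<noteq> x"
      using \<open>a \<in> Q\<close> components_on_subset S x_fresh by blast+
    then have "E a b"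
      using \<open>EK a b\<close> no_K unfolding EK_iff by blast
    then show ?thesis
      using components_on_closed[OF symp_E comp \<open>a \<in> Q\<close>] edge_in_V \<open>b \<in> insert x S\<close> x_fresh
      by blast
  qed
next
  fix Q a b
  assume "Q \<in> insert {x} (components_on S E)" and ab: "a \<in> Q" "b \<in> Q"
  then consider "Q = {x}" | "Q \<in> components_on S E"
    by blast
  then show "reach_in (insert x S) EK a b"
  proof cases
    case 1
    then show ?thesis
      using ab by simp
  next
    case 2
    then show ?thesis
      using reach_in_insert_EK components_on_reach[OF symp_E 2 ab] by simp
  qed
next
  fix a
  assume "a \<in> insert x S"
  then show "\<exists>Q\<in>insert {x} (components_on S E). a \<in> Q"
    using component_of_in_components_on[of a S E] by (cases "a = x") auto
next
  fix Q
  assume "Q \<in> insert {x} (components_on S E)"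
  then show "Q \<noteq> {} \<and> Q \<subseteq> insert x S"
    by (auto dest: components_on_nonempty components_on_subset)
qed

lemma components_on_insert_attached:
  assumes S: "S \<subseteq> V" and Q: "Q \<in> components_on S E"
    and K_Q: "K \<inter> S \<subseteq> Q" and K_S: "K \<inter> S \<noteq> {}"
  shows "components_on (insert x S) EK = insert (insert x Q) (components_on S E - {Q})"
proof (rule components_on_eqI)
  fix P a b
  assume P: "P \<in> insert (insert x Q) (components_on S E - {Q})" and "a \<in> P" "EK a b"
    and "b \<in> insert x S"
  consider "E a b" "a \<in> V" "b \<in> V" | "a = x" "b \<in> K" | "b = x" "a \<in> K"
    using \<open>EK a b\<close> edge_in_V unfolding EK_iff by blast
  then show "b \<in> P"
  proof cases
    case 1
    then have "a \<noteq> x" "b \<in> S"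
      using \<open>b \<in> insert x S\<close> x_fresh by auto
    then obtain P' where "P' \<in> components_on S E" "a \<in> P'" "P' \<subseteq> P"
      using P \<open>a \<in> P\<close> Q by (cases "P = insert x Q") auto
    then show ?thesis
      using components_on_closed[OF symp_E _ _ \<open>E a b\<close> \<open>b \<in> S\<close>] by blast
  next
    case 2
    then have "b \<in> Q"
      using \<open>b \<in> insert x S\<close> x_notin_K K_Q by blast
    moreover have "P = insert x Q"
      using P \<open>a \<in> P\<close> \<open>a = x\<close> components_on_subset S x_fresh by blast
    ultimately show ?thesis
      by simp
  next
    case 3
    then have "a \<in> Q"
      using P \<open>a \<in> P\<close> K_Q x_notin_K components_on_subset by blast
    then have "P = insert x Q"
      using P \<open>a \<in> P\<close> components_on_disjoint[OF symp_E _ Q] by blast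
    then show ?thesis
      using \<open>b = x\<close> by simp
  qed
next
  obtain k where k: "k \<in> K" "k \<in> Q"
    using K_S K_Q by blast
  have "EK x k"
    using k(1) unfolding EK_iff by blast
  then have "reach_in (insert x S) EK x k"
    using k(2) components_on_subset[OF Q] by (intro reach_in_step) auto
  then have x_reach: "reach_in (insert x S) EK x c" if "c \<in> Q" for c
    using reach_in_trans reach_in_insert_EK[OF components_on_reach[OF symp_E Q k(2) that]] by metis
  fix P a b
  assume "P \<in> insert (insert x Q) (components_on S E - {Q})" and ab: "a \<in> P" "b \<in> P"
  then consider "P = insert x Q" | "P \<in> components_on S E"
    by blast
  then show "reach_in (insert x S) EK a b"
  proof cases
    case 1
    have "reach_in (insert x S) EK c x" if "c \<in> Q" for c
      using reach_in_sym[OF symp_EK x_reach[OF that]] .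
    then show ?thesis
      using 1 ab x_reach reach_in_trans[of "insert x S" EK a x b] by auto
  next
    case 2
    then show ?thesis
      using reach_in_insert_EK components_on_reach[OF symp_E 2 ab] by simp
  qed
next
  fix a
  assume "a \<in> insert x S"
  then show "\<exists>P\<in>insert (insert x Q) (components_on S E - {Q}). a \<in> P"
    using component_of_in_components_on[of a S E] by (cases "a = x \<or> a \<in> Q") auto
next
  fix P
  assume "P \<in> insert (insert x Q) (components_on S E - {Q})"
  then show "P \<noteq> {} \<and> P \<subseteq> insert x S"
    using components_on_subset[OF Q] by (auto dest: components_on_nonempty components_on_subset)
qed

lemma connected_on_insert:
  assumes "connected_on W E" "W \<subseteq> V" "K \<inter> W \<noteq> {}"
  shows "connected_on (insert x W) EK"
proof (rule connected_on_if_components_on)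
  have "components_on W E = {W}"
    using components_on_if_connected_on[OF assms(1)] .
  then show "components_on (insert x W) EK = {insert x W}"
    using components_on_insert_attached[OF assms(2), of W] assms(3) by simp
qed simp

lemma search_tree_insert_root:
  assumes "search_tree E V T"
  shows "search_tree EK (insert x V) (Node x {|T|})"
proof (rule search_tree.intros)
  have "tverts T = V"
    using search_tree_tverts_distinct_labels[OF assms symp_E] by blast
  then show "\<forall>C. C |\<in>| {|T|} \<longrightarrow> search_tree EK (tverts C) C"
    using search_tree_EK[OF assms] by simp
  have "insert x V - {x} = V"
    using x_fresh by blast
  then show "tverts ` fset {|T|} = components_on (insert x V - {x}) EK"
    using components_on_EK[OF x_fresh] components_on_if_connected_on[OF connected] \<open>tverts T = V\<close>
    by simp
  show "connected_on (insert x V) EK"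
    using connected_on_insert[OF connected] K_subset K_nonempty by blast
qed simp_all

lemma R0_copy: "induces_copy_of ((\<lambda>T. Node x {|T|}) ` rot_verts V E) (insert x V) EK V E"
proof (rule induces_copy_ofI)
  have agree: "E p q = EK p q" if "T \<in> rot_verts V E" "p \<in> tverts T" "q \<in> tverts T" for T p q
    using that search_tree_tverts_distinct_labels[OF _ symp_E] x_fresh
    unfolding rot_verts_def by (metis EK_eq_E mem_Collect_eq)
  show "Node x {|T|} \<in> rot_verts (insert x V) EK" if "T \<in> rot_verts V E" for T
    using search_tree_insert_root that unfolding rot_verts_def by simp
  show "inj_on (\<lambda>T. Node x {|T|}) (rot_verts V E)"
    by (auto intro: inj_onI)
  show "\<exists>u' v'. rotation EK u' v' (Node x {|T|}) (Node x {|T'|})"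
    if "T \<in> rot_verts V E" "rotation E u v T T'" for T T' u v
  proof -
    have "rotation EK u v T T'"
      by (rule rotation_cong[OF that(2)]) (simp add: agree[OF that(1)])
    then have "rotation EK u v (Node x {|T|}) (Node x (finsert T' ({|T|} |-| {|T|})))"
      by (intro rotation.below) simp_all
    then show ?thesis
      by auto
  qed
  show "\<exists>u' v'. rotation E u' v' T T'"
    if "T \<in> rot_verts V E" "rotation EK u v (Node x {|T|}) (Node x {|T'|})" for T T' u v
  proof -
    have "root T \<noteq> x"
      using that(1) x_fresh root_in_tverts[of T] search_tree_tverts_distinct_labels[OF _ symp_E]
      unfolding rot_verts_def by fastforce
    with rotation_single_kid[OF that(2)] obtain T'' where
      "rotation EK u v T T''" "Node x {|T'|} = Node x {|T''|}"
      by auto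
    then have "rotation EK u v T T'"
      by (simp add: fsingleton_inject)
    then have "rotation E u v T T'"
      by (rule rotation_cong) (simp add: agree[OF that(1)])
    then show ?thesis
      by blast
  qed
qed

lemma search_tree_add_leaf_at_root:
  assumes T: "search_tree E W (Node a Cs)" and "W \<subseteq> V" "a \<in> K" "K \<inter> W \<subseteq> {a}"
  shows "search_tree EK (insert x W) (Node a (finsert (Node x {||}) Cs))"
proof (rule search_tree.intros)
  note T' = search_tree_NodeD[OF T]
  have kids: "tverts C \<subseteq> V" "x \<notin> tverts C" if "C |\<in>| Cs" for C
    using components_on_subset T'(5) that \<open>W \<subseteq> V\<close> x_fresh by blast+
  show "connected_on (insert x W) EK"
    using connected_on_insert T'(1,2) \<open>W \<subseteq> V\<close> \<open>a \<in> K\<close> by blast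
  show "a \<in> insert x W"
    using T'(2) by simp
  show "\<forall>C. C |\<in>| finsert (Node x {||}) Cs \<longrightarrow> search_tree EK (tverts C) C"
    using search_tree_leaf[of EK x] search_tree_EK T'(3) kids(1) by auto
  show "inj_on tverts (fset (finsert (Node x {||}) Cs))"
    using T'(4) kids(2) by auto
  have "insert x W - {a} = insert x (W - {a})"
    using \<open>a \<in> K\<close> x_notin_K by blast
  moreover have "K \<inter> (W - {a}) = {}"
    using assms(4) by blast
  ultimately show "tverts ` fset (finsert (Node x {||}) Cs) = components_on (insert x W - {a}) EK"
    using components_on_insert_isolated[of "W - {a}"] \<open>W \<subseteq> V\<close> T'(5) by auto
qed

lemma search_tree_add_leaf:
  "search_tree E W T \<Longrightarrow> W \<subseteq> V \<Longrightarrow> a \<in> K \<Longrightarrow> path_to T a p \<Longrightarrow> K \<inter> W \<subseteq> set p \<Longrightarrow>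
   search_tree EK (insert x W) (add_leaf x a T)"
proof (induction arbitrary: p rule: search_tree.induct)
  case (1 W r Cs)
  have T: "search_tree E W (Node r Cs)"
    by (rule search_tree.intros[OF "1.hyps"(1,2) _ "1.hyps"(3,4)]) (use "1.IH" in blast)
  show ?case
  proof (cases "r = a")
    case True
    have "distinct_labels (Node r Cs)"
      using search_tree_tverts_distinct_labels[OF T symp_E] by blast
    then have "p = [a]"
      using path_to_unique[OF "1.prems"(3), of "[a]"] path_to.here[of a Cs] True by simp
    then have "K \<inter> W \<subseteq> {a}"
      using "1.prems"(4) by simp
    then show ?thesis
      using search_tree_add_leaf_at_root[OF _ "1.prems"(1,2)] T True by (simp add: add_leaf_Node)
  next
    case False
    then obtain C0 q where C0: "C0 |\<in>| Cs" "path_to C0 a q" "p = r # q"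
      using "1.prems"(3) unfolding path_to_Node by blast
    define Q where "Q = tverts C0"
    have Q: "Q \<in> components_on (W - {r}) E" "a \<in> Q" "set q \<subseteq> Q"
      using "1.hyps"(4) C0(1) path_toD[OF C0(2)] unfolding Q_def by blast+
    have kids: "tverts C \<subseteq> V" "x \<notin> tverts C" if "C |\<in>| Cs" for C
      using components_on_subset "1.hyps"(4) that "1.prems"(1) x_fresh by blast+
    have K_Q: "K \<inter> (W - {r}) \<subseteq> Q" and K_q: "K \<inter> Q \<subseteq> set q"
      using "1.prems"(4) C0(3) Q(3) components_on_subset[OF Q(1)] by auto
    have IH: "search_tree EK (insert x Q) (add_leaf x a C0)"
      using "1.IH" C0(1,2) kids(1)[OF C0(1)] "1.prems"(2) K_q unfolding Q_def by blast
    have add_leaf_T: "add_leaf x a (Node r Cs) = Node r (finsert (add_leaf x a C0) (Cs |-| {|C0|}))"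
      using False add_leaf_kids[OF _ C0(1), of r a x] search_tree_tverts_distinct_labels[OF T symp_E] Q(2)
      unfolding Q_def by (simp add: add_leaf_Node)
    have tverts_C0: "tverts (add_leaf x a C0) = insert x Q"
      unfolding Q_def by (rule tverts_add_leaf[OF Q(2)[unfolded Q_def]])
    have "a \<in> W - {r}"
      using Q(2) components_on_subset[OF Q(1)] by blast
    have "tverts ` (fset Cs - {C0}) = tverts ` fset Cs - tverts ` {C0}"
      by (rule inj_on_image_set_diff[OF "1.hyps"(3)]) (use C0(1) in auto)
    then have "tverts ` fset (finsert (add_leaf x a C0) (Cs |-| {|C0|})) =
        insert (insert x Q) (tverts ` fset Cs - {Q})"
      using tverts_C0 unfolding Q_def by simp
    also have "\<dots> = components_on (insert x (W - {r})) EK"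
      using components_on_insert_attached[OF _ Q(1) K_Q] "1.hyps"(4) "1.prems"(1,2) \<open>a \<in> W - {r}\<close>
      by auto
    also have "insert x (W - {r}) = insert x W - {r}"
      using "1.hyps"(2) "1.prems"(1) x_fresh by blast
    finally have components: "tverts ` fset (finsert (add_leaf x a C0) (Cs |-| {|C0|})) =
        components_on (insert x W - {r}) EK" .
    have "inj_on tverts (fset (finsert (add_leaf x a C0) (Cs |-| {|C0|})))"
      using inj_on_subset[OF "1.hyps"(3)] kids(2) tverts_C0 by auto
    moreover have "connected_on (insert x W) EK"
      using connected_on_insert[OF "1.hyps"(1) "1.prems"(1)] \<open>a \<in> W - {r}\<close> "1.prems"(2) by blast
    moreover have "search_tree EK (tverts C) C" if "C |\<in>| Cs" for C
      using search_tree_EK kids(1)[OF that] "1.IH" that by blast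
    ultimately show ?thesis
      unfolding add_leaf_T using "1.hyps"(2) IH tverts_C0 components
      by (intro search_tree.intros) auto
  qed
qed

lemma deepest_clique_vertex:
  assumes "search_tree E V T"
  shows "v_lam K T \<in> K \<and> (\<exists>p. path_to T (v_lam K T) p \<and> K \<subseteq> set p) \<and>
    lam K T = depth T (v_lam K T)"
proof -
  obtain a p where "a \<in> K" "path_to T a p" "K \<subseteq> set p"
    using clique_on_root_path[OF assms symp_E clique K_subset finite_K K_nonempty] by blast
  moreover have "distinct_labels T"
    using search_tree_tverts_distinct_labels[OF assms symp_E] by blast
  ultimately show ?thesis
    using v_lam_eqI[OF _ finite_K] by metis
qed

lemma insertion_deepest_eq_add_leaf:
  "search_tree E V T \<Longrightarrow> insertion T (lam K T + 1) x (v_lam K T) = add_leaf x (v_lam K T) T"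
  using deepest_clique_vertex by (simp add: insertion_below_depth)

lemma rotation_add_leaf_deepest:
  assumes T: "search_tree E V T" and "rotation E u v T T'"
  defines "a \<equiv> v_lam K T"
  shows "rotation EK u v (add_leaf x a T) (add_leaf x (if a = v \<and> u \<in> K then u else a) T')"
proof -
  have "tverts T = V" "distinct_labels T"
    using search_tree_tverts_distinct_labels[OF T symp_E] by blast+
  moreover have "a \<in> K"
    using deepest_clique_vertex[OF T] unfolding a_def by blast
  moreover have "u \<noteq> x"
    using rotation_tverts[OF assms(2)] \<open>tverts T = V\<close> x_fresh by blast
  moreover have "EK p q = E p q" if "p \<in> tverts T" "q \<in> tverts T" for p q
    using that \<open>tverts T = V\<close> x_fresh EK_eq_E by metis
  moreover have "E w a" if "w \<in> tverts T" "EK w x" "w \<noteq> a" for w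
    using that \<open>tverts T = V\<close> x_fresh EK_x_iff clique \<open>a \<in> K\<close> unfolding is_clique_def by metis
  ultimately have "rotation EK u v (add_leaf x a T) (add_leaf x (if a = v \<and> EK u x then u else a) T')"
    using rotation_add_leaf[OF assms(2)] x_fresh by blast
  then show ?thesis
    using EK_x_iff[OF \<open>u \<noteq> x\<close>] by simp
qed

lemma v_lam_rotation:
  assumes T: "search_tree E V T" and "rotation E u v T T'" "search_tree E V T'"
  shows "v_lam K T' = (if v_lam K T = v \<and> u \<in> K then u else v_lam K T)"
proof -
  obtain p where "path_to T (v_lam K T) p" "K \<subseteq> set p" "v_lam K T \<in> K"
    using deepest_clique_vertex[OF T] by blast
  then obtain p' where "path_to T' (if v_lam K T = v \<and> u \<in> K then u else v_lam K T) p'" "K \<subseteq> set p'"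
    using clique_on_root_path_rotation[OF assms(2) _ clique] search_tree_tverts_distinct_labels[OF T symp_E]
    by blast
  moreover have "distinct_labels T'"
    using search_tree_tverts_distinct_labels[OF assms(3) symp_E] by blast
  moreover have "(if v_lam K T = v \<and> u \<in> K then u else v_lam K T) \<in> K"
    using \<open>v_lam K T \<in> K\<close> by simp
  ultimately show ?thesis
    using v_lam_eqI[OF _ finite_K] by blast
qed

lemma search_tree_add_leaf_deepest:
  assumes "search_tree E V T"
  shows "search_tree EK (insert x V) (add_leaf x (v_lam K T) T)"
proof -
  obtain p where "v_lam K T \<in> K" "path_to T (v_lam K T) p" "K \<subseteq> set p"
    using deepest_clique_vertex[OF assms] by blast
  then show ?thesis
    using search_tree_add_leaf[OF assms subset_refl] by blast
qed

lemma rotation_add_leaf_deepest_iff: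
  assumes T: "search_tree E V T" and T': "search_tree E V T'"
  shows "rotation EK u v (add_leaf x (v_lam K T) T) (add_leaf x (v_lam K T') T') \<longleftrightarrow>
    rotation E u v T T'"
proof
  assume rot: "rotation EK u v (add_leaf x (v_lam K T) T) (add_leaf x (v_lam K T') T')"
  have "tverts T = V" "tverts T' = V" "distinct_labels T"
    using search_tree_tverts_distinct_labels[OF T symp_E] search_tree_tverts_distinct_labels[OF T' symp_E]
    by blast+
  then have "v \<noteq> x"
    using rotation_not_leaf_label[OF rot] is_leaf_label_add_leaf x_fresh by metis
  then obtain T'' where T'': "rotation E u v T T''"
    using rotation_of_add_leaf[OF rot HOL.refl \<open>distinct_labels T\<close>] by blast
  have "distinct_labels (add_leaf x (v_lam K T) T)"
    using search_tree_tverts_distinct_labels[OF search_tree_add_leaf_deepest[OF T] symp_EK] by blast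
  then have "add_leaf x (if v_lam K T = v \<and> u \<in> K then u else v_lam K T) T'' =
      add_leaf x (v_lam K T') T'"
    using rotation_deterministic[OF rotation_add_leaf_deepest[OF T T''] _ rot] by blast
  moreover have "x \<notin> tverts T''" "x \<notin> tverts T'"
    using rotation_tverts[OF T''] \<open>tverts T = V\<close> \<open>tverts T' = V\<close> x_fresh by simp_all
  ultimately have "T'' = T'"
    using prune_add_leaf by metis
  then show "rotation E u v T T'"
    using T'' by blast
next
  assume "rotation E u v T T'"
  then show "rotation EK u v (add_leaf x (v_lam K T) T) (add_leaf x (v_lam K T') T')"
    using rotation_add_leaf_deepest[OF T] v_lam_rotation[OF T _ T'] by simp
qed

lemma R1_copy:
  "induces_copy_of ((\<lambda>T. add_leaf x (v_lam K T) T) ` rot_verts V E) (insert x V) EK V E"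
proof (rule induces_copy_ofI)
  show "add_leaf x (v_lam K T) T \<in> rot_verts (insert x V) EK" if "T \<in> rot_verts V E" for T
    using search_tree_add_leaf_deepest that unfolding rot_verts_def by simp
  have fresh: "x \<notin> tverts T" if "T \<in> rot_verts V E" for T
    using that search_tree_tverts_distinct_labels[OF _ symp_E] x_fresh unfolding rot_verts_def by blast
  show "inj_on (\<lambda>T. add_leaf x (v_lam K T) T) (rot_verts V E)"
  proof (rule inj_onI)
    fix T T'
    assume "T \<in> rot_verts V E" "T' \<in> rot_verts V E"
      and "add_leaf x (v_lam K T) T = add_leaf x (v_lam K T') T'"
    then show "T = T'"
      using prune_add_leaf fresh by metis
  qed
  show "\<exists>u' v'. rotation EK u' v' (add_leaf x (v_lam K T) T) (add_leaf x (v_lam K T') T')"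
    if "T \<in> rot_verts V E" "T' \<in> rot_verts V E" "rotation E u v T T'" for T T' u v
    using that rotation_add_leaf_deepest_iff[of T T' u v] unfolding rot_verts_def by blast
  show "\<exists>u' v'. rotation E u' v' T T'"
    if "T \<in> rot_verts V E" "T' \<in> rot_verts V E"
      "rotation EK u v (add_leaf x (v_lam K T) T) (add_leaf x (v_lam K T') T')" for T T' u v
    using that rotation_add_leaf_deepest_iff[of T T' u v] unfolding rot_verts_def by blast
qed

end

theorem proposition2p6:
  fixes V :: "'a set" and E :: "'a \<Rightarrow> 'a \<Rightarrow> bool" and K :: "'a set" and x :: 'a
  assumes "graph V E" and "connected_on V E"
    and "K \<subseteq> V" and "K \<noteq> {}" and "is_clique K E"
    and "x \<notin> V"
  defines "EK \<equiv> add_vertex_edges E K x"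
    and "R0 \<equiv> {insertion T 0 x (v_lam K T) | T. T \<in> rot_verts V E}"
    and "R1 \<equiv> {insertion T (lam K T + 1) x (v_lam K T) | T. T \<in> rot_verts V E}"
  shows "induces_copy_of R0 (insert x V) EK V E \<and> induces_copy_of R1 (insert x V) EK V E"
proof -
  interpret clique_extension V E K x
    by unfold_locales (fact assms)+
  have "R0 = (\<lambda>T. Node x {|T|}) ` rot_verts V E"
    unfolding R0_def insertion_def by auto
  moreover have "R1 = (\<lambda>T. add_leaf x (v_lam K T) T) ` rot_verts V E"
    unfolding R1_def rot_verts_def using insertion_deepest_eq_add_leaf by force
  ultimately show ?thesis
    unfolding EK_def using R0_copy R1_copy by simp
qed

end
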